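(* For any finite set $\mathcal{I}$ of closed intervals on the real line and any $k \in \mathbb{N}$, there exists a balanced $k$-coloring of $\mathcal{I}$.
   Context: Let $\mathcal{I}=\{I_1,\dots,I_n\}$ be a finite set of closed intervals $[\ell,r]\subset\mathbb{R}$ and $K=\{1,\dots,k\}$. A $k$-coloring is a map $\chi:\mathcal{I}\to K$. For $x\in\mathbb{R}$ and $i\in K$, let $c_i(x)$ be the number of intervals of $\mathcal{I}$ that contain $x$ and have color $i$. The imbalance at $x$ is $\mathrm{imb}(x)=\max_{i,j\in K}|c_i(x)-c_j(x)|$, and the imbalance of $\chi$ is $\mathrm{imb}(\chi)=\max_{x\in\mathbb{R}}\mathrm{imb}(x)$. A $k$-coloring is called balanced if its imbalance is at most one. *)

theory Defs
  imports Complex_Main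
begin

text \<open>A closed interval [l, r] is represented by the pair (l, r) with l \<le> r.
  A finite set of closed intervals is a finite set of such pairs.
  Colors are K = {1..k}.\<close>

definition closed_interval :: "real \<times> real \<Rightarrow> real set" where
  "closed_interval I = {fst I .. snd I}"

definition is_k_coloring :: "(real \<times> real) set \<Rightarrow> nat \<Rightarrow> (real \<times> real \<Rightarrow> nat) \<Rightarrow> bool" where
  "is_k_coloring \<I> k \<chi> \<longleftrightarrow> (\<forall>I\<in>\<I>. \<chi> I \<in> {1..k})"

definition color_count :: "(real \<times> real) set \<Rightarrow> (real \<times> real \<Rightarrow> nat) \<Rightarrow> nat \<Rightarrow> real \<Rightarrow> nat" where
  "color_count \<I> \<chi> i x = card {I\<in>\<I>. x \<in> closed_interval I \<and> \<chi> I = i}"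

definition imb_at :: "(real \<times> real) set \<Rightarrow> nat \<Rightarrow> (real \<times> real \<Rightarrow> nat) \<Rightarrow> real \<Rightarrow> int" where
  "imb_at \<I> k \<chi> x = Max {\<bar>int (color_count \<I> \<chi> i x) - int (color_count \<I> \<chi> j x)\<bar> | i j. i \<in> {1..k} \<and> j \<in> {1..k}}"

text \<open>imb(\<chi>) = max over x of imb(x); balanced means imb(\<chi>) \<le> 1, i.e. imb(x) \<le> 1 for all x.\<close>
definition balanced :: "(real \<times> real) set \<Rightarrow> nat \<Rightarrow> (real \<times> real \<Rightarrow> nat) \<Rightarrow> bool" where
  "balanced \<I> k \<chi> \<longleftrightarrow> (\<forall>x::real. imb_at \<I> k \<chi> x \<le> 1)"

end

theory Submission
  imports Defs "HOL-Library.Product_Lexorder"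
begin

text \<open>
  Two colours: order the endpoints of the intervals, a left endpoint before a right endpoint at
  the same coordinate, and sign them \<open>\<plusminus>1\<close> so that the two endpoints of every interval get
  opposite signs and every initial segment has signed sum in \<open>{-1, 0, 1}\<close>. Such a signing is
  built by giving opposite signs to the two smallest endpoints and contracting them out of the
  endpoint matching. Colouring each interval by the sign of its left endpoint, the difference of
  the two colour classes at \<open>x\<close> is the signed sum of the endpoints up to \<open>x\<close>.

  \<open>k\<close> colours (de Werra): take a colouring minimising the sum, over all points, of the squared
  sizes of the colour classes there. If two classes \<open>c, d\<close> differ by at least two somewhere,
  recolouring their union by a balanced 2-colouring strictly decreases this potential.
\<close>

definition sign :: "bool \<Rightarrow> int" where
  "sign b = (if b then 1 else -1)"

definition perfect_matching :: "'e set \<Rightarrow> ('e \<Rightarrow> 'e) \<Rightarrow> bool" where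
  "perfect_matching E M \<longleftrightarrow> (\<forall>e\<in>E. M e \<in> E \<and> M e \<noteq> e \<and> M (M e) = e)"

definition lower_set :: "('e \<Rightarrow> 'k::linorder) \<Rightarrow> 'e set \<Rightarrow> 'e set \<Rightarrow> bool" where
  "lower_set key E D \<longleftrightarrow> D \<subseteq> E \<and> (\<forall>e\<in>D. \<forall>e'\<in>E. key e' \<le> key e \<longrightarrow> e' \<in> D)"

lemma perfect_matchingD:
  assumes "perfect_matching E M" "e \<in> E"
  shows "M e \<in> E" "M e \<noteq> e" "M (M e) = e"
  using assms unfolding perfect_matching_def by auto

lemma sum_sign_eq_card_diff:
  assumes "finite A"
  shows "(\<Sum>a\<in>A. sign (\<sigma> a)) = int (card {a\<in>A. \<sigma> a}) - int (card {a\<in>A. \<not> \<sigma> a})"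
proof -
  have "(\<Sum>a\<in>A. sign (\<sigma> a)) = (\<Sum>a\<in>A \<inter> {a. \<sigma> a}. 1) + (\<Sum>a\<in>A \<inter> - {a. \<sigma> a}. -1)"
    unfolding sign_def using assms by (rule sum.If_cases)
  also have "A \<inter> {a. \<sigma> a} = {a\<in>A. \<sigma> a}" by auto
  also have "A \<inter> - {a. \<sigma> a} = {a\<in>A. \<not> \<sigma> a}" by auto
  finally show ?thesis by simp
qed

lemma perfect_matching_contract:
  assumes M: "perfect_matching E M" and "e1 \<in> E" "e2 \<in> E" "e1 \<noteq> e2"
  shows "perfect_matching (E - {e1, e2})
           (\<lambda>e. if e = M e1 then M e2 else if e = M e2 then M e1 else M e)"
    (is "perfect_matching _ ?N")
proof -
  note M_in = perfect_matchingD(1)[OF M] and M_ne = perfect_matchingD(2)[OF M]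
    and M_M = perfect_matchingD(3)[OF M]
  have M_eq: "M a = M b \<longleftrightarrow> a = b" if "a \<in> E" "b \<in> E" for a b
    using M_M that by metis
  have ne: "M e1 \<noteq> M e2" "M e1 \<noteq> e1" "M e2 \<noteq> e2"
    using assms M_eq M_ne by auto
  have "?N e \<in> E - {e1, e2} \<and> ?N e \<noteq> e \<and> ?N (?N e) = e" if e: "e \<in> E - {e1, e2}" for e
  proof -
    consider "e = M e1" | "e = M e2" | "e \<noteq> M e1" "e \<noteq> M e2" by blast
    then show ?thesis
    proof cases
      case 1
      then have "M e2 \<noteq> e1" using e M_M assms by force
      then show ?thesis using 1 ne M_in M_M \<open>e2 \<in> E\<close> by auto
    next
      case 2
      then have "M e1 \<noteq> e2" using e M_M assms by force
      then show ?thesis using 2 ne M_in M_M \<open>e1 \<in> E\<close> by auto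
    next
      case 3
      have "M e \<noteq> e1" "M e \<noteq> e2" using 3 e M_M by auto
      moreover have "M e \<noteq> M e1" "M e \<noteq> M e2" using e M_eq assms by auto
      ultimately show ?thesis using 3 e M_in M_M M_ne by auto
    qed
  qed
  then show ?thesis unfolding perfect_matching_def by blast
qed

lemma lower_set_sum_sign_bound:
  assumes "finite E" "e1 \<in> E" "e2 \<in> E" "e1 \<noteq> e2"
    and e1_least: "\<forall>e\<in>E. key e1 \<le> key e"
    and e2_least: "\<forall>e\<in>E - {e1}. key e2 \<le> key e"
    and opposite: "\<tau> e1 \<noteq> \<tau> e2"
    and bound: "\<forall>D'. lower_set key (E - {e1, e2}) D' \<longrightarrow> \<bar>\<Sum>e\<in>D'. sign (\<tau> e)\<bar> \<le> 1"
    and D: "lower_set key E D"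
  shows "\<bar>\<Sum>e\<in>D. sign (\<tau> e)\<bar> \<le> 1"
proof (cases "e2 \<in> D")
  case False
  have "D \<subseteq> {e1}"
    using D False e2_least \<open>e2 \<in> E\<close> unfolding lower_set_def by blast
  then have "D = {} \<or> D = {e1}" by blast
  then show ?thesis by (auto simp: sign_def)
next
  case True
  have "e1 \<in> D" using D True e1_least \<open>e1 \<in> E\<close> unfolding lower_set_def by blast
  have "finite D" using D \<open>finite E\<close> unfolding lower_set_def by (blast intro: finite_subset)
  have "lower_set key (E - {e1, e2}) (D - {e1, e2})"
    using D unfolding lower_set_def by blast
  moreover have "(\<Sum>e\<in>D. sign (\<tau> e)) = (\<Sum>e\<in>D - {e1, e2}. sign (\<tau> e))"
    using \<open>finite D\<close> \<open>e1 \<in> D\<close> True \<open>e1 \<noteq> e2\<close> opposite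
    by (simp add: sum.remove[of D e1] sum.remove[of "D - {e1}" e2] Diff_insert2[symmetric] sign_def)
  ultimately show ?thesis using bound by simp
qed

lemma alternating_signing_extend:
  fixes \<tau>' :: "'e \<Rightarrow> bool"
  assumes M: "perfect_matching E M" and "e1 \<in> E" "e2 \<in> E" "e1 \<noteq> e2"
    and alt: "\<forall>e\<in>E - {e1, e2}.
      \<tau>' (if e = M e1 then M e2 else if e = M e2 then M e1 else M e) \<noteq> \<tau>' e"
  shows "\<exists>\<tau>. \<tau> e1 \<noteq> \<tau> e2 \<and> (\<forall>e\<in>E - {e1, e2}. \<tau> e = \<tau>' e) \<and> (\<forall>e\<in>E. \<tau> (M e) \<noteq> \<tau> e)"
proof -
  note M_in = perfect_matchingD(1)[OF M] and M_ne = perfect_matchingD(2)[OF M]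
    and M_M = perfect_matchingD(3)[OF M]
  show ?thesis
  proof (cases "M e1 = e2")
    case True
    then have "M e2 = e1" using M_M \<open>e1 \<in> E\<close> by blast
    let ?\<tau> = "\<tau>'(e1 := True, e2 := False)"
    have "?\<tau> (M e) \<noteq> ?\<tau> e" if "e \<in> E" for e
    proof (cases "e \<in> {e1, e2}")
      case True
      then show ?thesis using \<open>M e1 = e2\<close> \<open>M e2 = e1\<close> \<open>e1 \<noteq> e2\<close> by auto
    next
      case False
      then have "M e \<notin> {e1, e2}" using M_M[OF that] \<open>M e1 = e2\<close> \<open>M e2 = e1\<close> by auto
      then show ?thesis using bspec[OF alt, of e] that False \<open>M e1 = e2\<close> \<open>M e2 = e1\<close> by auto
    qed
    then show ?thesis using \<open>e1 \<noteq> e2\<close> by (intro exI[of _ ?\<tau>]) auto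
  next
    case False
    then have "M e2 \<noteq> e1" using M_M \<open>e2 \<in> E\<close> by blast
    let ?\<tau> = "\<tau>'(e1 := \<not> \<tau>' (M e1), e2 := \<tau>' (M e1))"
    have partners: "M e1 \<in> E - {e1, e2}" "M e2 \<in> E - {e1, e2}"
      using False \<open>M e2 \<noteq> e1\<close> \<open>e1 \<in> E\<close> \<open>e2 \<in> E\<close> M_in M_ne by auto
    have partners_opposite: "\<tau>' (M e2) \<noteq> \<tau>' (M e1)"
      using bspec[OF alt partners(1)] by simp
    have generic: "?\<tau> (M e) \<noteq> ?\<tau> e" if "e \<in> E - {e1, e2}" "e \<noteq> M e1" "e \<noteq> M e2" for e
    proof -
      have "M e \<noteq> e1" "M e \<noteq> e2" using that M_M by auto
      then show ?thesis using bspec[OF alt that(1)] that by simp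
    qed
    have "?\<tau> (M e) \<noteq> ?\<tau> e" if "e \<in> E" for e
    proof -
      consider "e = e1" | "e = e2" | "e = M e1" | "e = M e2" | "e \<in> E - {e1, e2}" "e \<noteq> M e1" "e \<noteq> M e2"
        using \<open>e \<in> E\<close> by blast
      then show ?thesis
        using partners M_M \<open>e1 \<in> E\<close> \<open>e2 \<in> E\<close> \<open>e1 \<noteq> e2\<close> partners_opposite generic
        by cases simp_all
    qed
    then show ?thesis using \<open>e1 \<noteq> e2\<close> by (intro exI[of _ ?\<tau>]) auto
  qed
qed

lemma alternating_signing_exists:
  fixes key :: "'e \<Rightarrow> 'k::linorder"
  assumes "finite E" "perfect_matching E M"
  shows "\<exists>\<tau>. (\<forall>e\<in>E. \<tau> (M e) \<noteq> \<tau> e) \<and>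
              (\<forall>D. lower_set key E D \<longrightarrow> \<bar>\<Sum>e\<in>D. sign (\<tau> e)\<bar> \<le> 1)"
  using assms
proof (induction "card E" arbitrary: E M rule: less_induct)
  case less
  show ?case
  proof (cases "E = {}")
    case True
    then show ?thesis by (auto simp: lower_set_def)
  next
    case False
    define e1 where "e1 = arg_min_on key E"
    have e1: "e1 \<in> E" "\<forall>e\<in>E. key e1 \<le> key e"
      using arg_min_if_finite(1)[OF \<open>finite E\<close> False] arg_min_least[OF \<open>finite E\<close> False]
      unfolding e1_def by auto
    have "M e1 \<in> E - {e1}"
      using perfect_matchingD[OF less.prems(2) e1(1)] by blast
    then have "E - {e1} \<noteq> {}" by blast
    define e2 where "e2 = arg_min_on key (E - {e1})"
    have "finite (E - {e1})" using \<open>finite E\<close> by blast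
    have e2: "e2 \<in> E - {e1}" "\<forall>e\<in>E - {e1}. key e2 \<le> key e"
      using arg_min_if_finite(1)[OF \<open>finite (E - {e1})\<close> \<open>E - {e1} \<noteq> {}\<close>]
        arg_min_least[OF \<open>finite (E - {e1})\<close> \<open>E - {e1} \<noteq> {}\<close>]
      unfolding e2_def by auto
    define M' where "M' e = (if e = M e1 then M e2 else if e = M e2 then M e1 else M e)" for e
    have "e2 \<in> E" "e1 \<noteq> e2" using e2(1) by auto
    have matching': "perfect_matching (E - {e1, e2}) M'"
      unfolding M'_def using perfect_matching_contract less.prems(2) e1(1) \<open>e2 \<in> E\<close> \<open>e1 \<noteq> e2\<close> .
    have smaller: "card (E - {e1, e2}) < card E"
      using \<open>finite E\<close> e1(1) \<open>e2 \<in> E\<close> by (intro psubset_card_mono) auto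
    have "finite (E - {e1, e2})" using \<open>finite E\<close> by blast
    from less.hyps[OF smaller this matching'] obtain \<tau>' where
      alt': "\<forall>e\<in>E - {e1, e2}. \<tau>' (M' e) \<noteq> \<tau>' e" and
      bound': "\<forall>D. lower_set key (E - {e1, e2}) D \<longrightarrow> \<bar>\<Sum>e\<in>D. sign (\<tau>' e)\<bar> \<le> 1"
      by blast
    obtain \<tau> where \<tau>: "\<tau> e1 \<noteq> \<tau> e2" "\<forall>e\<in>E - {e1, e2}. \<tau> e = \<tau>' e" "\<forall>e\<in>E. \<tau> (M e) \<noteq> \<tau> e"
      using alternating_signing_extend[OF less.prems(2) e1(1) \<open>e2 \<in> E\<close> \<open>e1 \<noteq> e2\<close> alt'[unfolded M'_def]]
      by blast
    have "\<forall>D. lower_set key (E - {e1, e2}) D \<longrightarrow> \<bar>\<Sum>e\<in>D. sign (\<tau> e)\<bar> \<le> 1"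
    proof (intro allI impI)
      fix D assume D: "lower_set key (E - {e1, e2}) D"
      then have "\<tau> e = \<tau>' e" if "e \<in> D" for e
        using \<tau>(2) that unfolding lower_set_def by blast
      then have "(\<Sum>e\<in>D. sign (\<tau> e)) = (\<Sum>e\<in>D. sign (\<tau>' e))" by simp
      then show "\<bar>\<Sum>e\<in>D. sign (\<tau> e)\<bar> \<le> 1" using bound' D by simp
    qed
    then have "\<forall>D. lower_set key E D \<longrightarrow> \<bar>\<Sum>e\<in>D. sign (\<tau> e)\<bar> \<le> 1"
      using lower_set_sum_sign_bound[OF less.prems(1) e1(1) _ _ e1(2) e2(2) \<tau>(1)] e2(1) by blast
    with \<tau>(3) show ?thesis by blast
  qed
qed

lemma interval_two_colouring:
  fixes J :: "(real \<times> real) set"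
  assumes "finite J" and proper: "\<forall>I\<in>J. fst I \<le> snd I"
  shows "\<exists>\<sigma>. \<forall>x. \<bar>int (card {I\<in>J. x \<in> closed_interval I \<and> \<sigma> I})
                 - int (card {I\<in>J. x \<in> closed_interval I \<and> \<not> \<sigma> I})\<bar> \<le> 1"
proof -
  define E where "E = J \<times> (UNIV :: bool set)"
  define M where "M = (\<lambda>(I :: real \<times> real, b :: bool). (I, \<not> b))"
  \<comment> \<open>The endpoints with key at most \<open>(x, 0)\<close> are the left endpoints \<open>\<le> x\<close> and the right
    endpoints \<open>< x\<close>; only the intervals containing \<open>x\<close> contribute a single one of them.\<close>
  define key where "key = (\<lambda>(I :: real \<times> real, b). if b then (fst I, 0 :: nat) else (snd I, 1))"
  have "finite E" using \<open>finite J\<close> by (simp add: E_def)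
  moreover have "perfect_matching E M" by (auto simp: perfect_matching_def E_def M_def)
  ultimately obtain \<tau> where alt: "\<forall>e\<in>E. \<tau> (M e) \<noteq> \<tau> e"
    and bound: "\<forall>D. lower_set key E D \<longrightarrow> \<bar>\<Sum>e\<in>D. sign (\<tau> e)\<bar> \<le> 1"
    using alternating_signing_exists[of E M key] by blast
  define \<sigma> where "\<sigma> I = \<tau> (I, True)" for I
  have \<tau>_right: "\<tau> (I, False) = (\<not> \<sigma> I)" if "I \<in> J" for I
    using alt[rule_format, of "(I, True)"] that by (auto simp: E_def M_def \<sigma>_def)
  have "\<bar>int (card {I\<in>J. x \<in> closed_interval I \<and> \<sigma> I})
          - int (card {I\<in>J. x \<in> closed_interval I \<and> \<not> \<sigma> I})\<bar> \<le> 1" for x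
  proof -
    define D where "D = {e\<in>E. key e \<le> (x, 0)}"
    have "lower_set key E D" by (auto simp: lower_set_def D_def)
    have "(\<Sum>e\<in>D. sign (\<tau> e)) = (\<Sum>I\<in>J. \<Sum>b\<in>UNIV. if key (I, b) \<le> (x, 0) then sign (\<tau> (I, b)) else 0)"
      unfolding D_def E_def using \<open>finite J\<close>
      by (simp add: sum.inter_filter sum.cartesian_product)
    also have "\<dots> = (\<Sum>I\<in>J. if x \<in> closed_interval I then sign (\<sigma> I) else 0)"
      using proper \<tau>_right
      by (intro sum.cong) (auto simp: UNIV_bool key_def closed_interval_def \<sigma>_def sign_def)
    also have "\<dots> = (\<Sum>I\<in>{I\<in>J. x \<in> closed_interval I}. sign (\<sigma> I))"
      using \<open>finite J\<close> by (simp add: sum.inter_filter)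
    also have "\<dots> = int (card {I\<in>J. x \<in> closed_interval I \<and> \<sigma> I})
                   - int (card {I\<in>J. x \<in> closed_interval I \<and> \<not> \<sigma> I})"
      using \<open>finite J\<close> by (simp add: sum_sign_eq_card_diff conj_ac)
    finally show ?thesis using bound[rule_format, OF \<open>lower_set key E D\<close>] by simp
  qed
  then show ?thesis by blast
qed

lemma sum_squares_balanced_split:
  fixes p q a b :: int
  assumes sum_eq: "p + q = a + b" and balanced: "\<bar>p - q\<bar> \<le> 1"
  shows "p\<^sup>2 + q\<^sup>2 \<le> a\<^sup>2 + b\<^sup>2"
    and "2 \<le> \<bar>a - b\<bar> \<Longrightarrow> p\<^sup>2 + q\<^sup>2 < a\<^sup>2 + b\<^sup>2"
proof -
  have parallelogram: "2 * (u\<^sup>2 + v\<^sup>2) = (u + v)\<^sup>2 + (u - v)\<^sup>2" for u v :: int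
    by (simp add: power2_eq_square algebra_simps)
  \<comment> \<open>\<open>p - q\<close> and \<open>a - b\<close> have the same parity, and \<open>\<bar>p - q\<bar> \<le> 1\<close>.\<close>
  have "\<bar>p - q\<bar> \<le> \<bar>a - b\<bar>" using assms by presburger
  then show "p\<^sup>2 + q\<^sup>2 \<le> a\<^sup>2 + b\<^sup>2"
    using parallelogram[of p q] parallelogram[of a b] sum_eq by (simp add: abs_le_square_iff)
  assume "2 \<le> \<bar>a - b\<bar>"
  then have "(p - q)\<^sup>2 < (a - b)\<^sup>2" using balanced by (intro power2_strict_mono) simp
  then show "p\<^sup>2 + q\<^sup>2 < a\<^sup>2 + b\<^sup>2"
    using parallelogram[of p q] parallelogram[of a b] sum_eq by simp
qed

definition recolour :: "('a \<Rightarrow> nat) \<Rightarrow> nat \<Rightarrow> nat \<Rightarrow> ('a \<Rightarrow> bool) \<Rightarrow> 'a \<Rightarrow> nat" where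
  "recolour \<chi> c d \<sigma> a = (if \<chi> a \<in> {c, d} then if \<sigma> a then c else d else \<chi> a)"

lemma sum_split_two:
  assumes "finite K" "c \<in> K" "d \<in> K" "c \<noteq> d"
  shows "sum h K = h c + h d + sum h (K - {c, d})"
proof -
  have "sum h K = h c + sum h (K - {c})" using assms by (simp add: sum.remove)
  also have "sum h (K - {c}) = h d + sum h (K - {c} - {d})" using assms by (simp add: sum.remove)
  also have "K - {c} - {d} = K - {c, d}" by auto
  finally show ?thesis by (simp add: add.assoc)
qed

lemma recolour_sum_squares:
  fixes \<chi> :: "'a \<Rightarrow> nat"
  assumes "finite E" "finite K" "c \<in> K" "d \<in> K" "c \<noteq> d"
    and balanced: "\<bar>int (card {a\<in>E. \<chi> a \<in> {c, d} \<and> \<sigma> a}) - int (card {a\<in>E. \<chi> a \<in> {c, d} \<and> \<not> \<sigma> a})\<bar> \<le> 1"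
  shows "(\<Sum>i\<in>K. (card {a\<in>E. recolour \<chi> c d \<sigma> a = i})\<^sup>2) \<le> (\<Sum>i\<in>K. (card {a\<in>E. \<chi> a = i})\<^sup>2)"
    and "2 \<le> \<bar>int (card {a\<in>E. \<chi> a = c}) - int (card {a\<in>E. \<chi> a = d})\<bar> \<Longrightarrow>
      (\<Sum>i\<in>K. (card {a\<in>E. recolour \<chi> c d \<sigma> a = i})\<^sup>2) < (\<Sum>i\<in>K. (card {a\<in>E. \<chi> a = i})\<^sup>2)"
proof -
  let ?n = "\<lambda>i. card {a\<in>E. \<chi> a = i}"
  let ?n' = "\<lambda>i. card {a\<in>E. recolour \<chi> c d \<sigma> a = i}"
  let ?P = "card {a\<in>E. \<chi> a \<in> {c, d} \<and> \<sigma> a}" and ?N = "card {a\<in>E. \<chi> a \<in> {c, d} \<and> \<not> \<sigma> a}"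
  have unchanged: "?n' i = ?n i" if "i \<notin> {c, d}" for i
    using that unfolding recolour_def by (intro arg_cong[where f = card]) auto
  have "{a\<in>E. recolour \<chi> c d \<sigma> a = c} = {a\<in>E. \<chi> a \<in> {c, d} \<and> \<sigma> a}"
    and "{a\<in>E. recolour \<chi> c d \<sigma> a = d} = {a\<in>E. \<chi> a \<in> {c, d} \<and> \<not> \<sigma> a}"
    using \<open>c \<noteq> d\<close> unfolding recolour_def by auto
  then have n'_c: "?n' c = ?P" and n'_d: "?n' d = ?N" by simp_all
  have "?P + ?N = card {a\<in>E. \<chi> a \<in> {c, d}}"
    using \<open>finite E\<close> by (subst card_Un_disjoint[symmetric]) (auto intro: arg_cong[where f = card])
  also have "\<dots> = ?n c + ?n d"
    using \<open>finite E\<close> \<open>c \<noteq> d\<close> by (subst card_Un_disjoint[symmetric]) (auto intro: arg_cong[where f = card])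
  finally have sum_eq: "int (?n' c) + int (?n' d) = int (?n c) + int (?n d)"
    unfolding n'_c n'_d by linarith
  have bal: "\<bar>int (?n' c) - int (?n' d)\<bar> \<le> 1" unfolding n'_c n'_d by (rule balanced)
  have "int ((?n' c)\<^sup>2 + (?n' d)\<^sup>2) \<le> int ((?n c)\<^sup>2 + (?n d)\<^sup>2)"
    using sum_squares_balanced_split(1)[OF sum_eq bal] by simp
  then have le: "(?n' c)\<^sup>2 + (?n' d)\<^sup>2 \<le> (?n c)\<^sup>2 + (?n d)\<^sup>2" by linarith
  have less: "(?n' c)\<^sup>2 + (?n' d)\<^sup>2 < (?n c)\<^sup>2 + (?n d)\<^sup>2" if "2 \<le> \<bar>int (?n c) - int (?n d)\<bar>"
  proof -
    have "int ((?n' c)\<^sup>2 + (?n' d)\<^sup>2) < int ((?n c)\<^sup>2 + (?n d)\<^sup>2)"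
      using sum_squares_balanced_split(2)[OF sum_eq bal that] by simp
    then show ?thesis by linarith
  qed
  have rest: "(\<Sum>i\<in>K - {c, d}. (?n' i)\<^sup>2) = (\<Sum>i\<in>K - {c, d}. (?n i)\<^sup>2)"
    using unchanged by simp
  show "(\<Sum>i\<in>K. (?n' i)\<^sup>2) \<le> (\<Sum>i\<in>K. (?n i)\<^sup>2)"
    and "2 \<le> \<bar>int (?n c) - int (?n d)\<bar> \<Longrightarrow> (\<Sum>i\<in>K. (?n' i)\<^sup>2) < (\<Sum>i\<in>K. (?n i)\<^sup>2)"
    using le less rest sum_split_two[OF assms(2-5), of "\<lambda>i. (?n' i)\<^sup>2"]
      sum_split_two[OF assms(2-5), of "\<lambda>i. (?n i)\<^sup>2"] by simp_all
qed

definition colour_potential :: "'a set set \<Rightarrow> nat \<Rightarrow> ('a \<Rightarrow> nat) \<Rightarrow> nat" where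
  "colour_potential H k \<chi> = (\<Sum>E\<in>H. \<Sum>i\<in>{1..k}. (card {a\<in>E. \<chi> a = i})\<^sup>2)"

lemma hypergraph_balanced_colouring:
  fixes H :: "'a set set" and k :: nat
  assumes "finite H" "\<forall>E\<in>H. finite E" "1 \<le> k"
    and two_colourable: "\<forall>J. \<exists>\<sigma>. \<forall>E\<in>H.
      \<bar>int (card {a\<in>E. a \<in> J \<and> \<sigma> a}) - int (card {a\<in>E. a \<in> J \<and> \<not> \<sigma> a})\<bar> \<le> 1"
  shows "\<exists>\<chi>. (\<forall>a. \<chi> a \<in> {1..k}) \<and>
    (\<forall>E\<in>H. \<forall>i\<in>{1..k}. \<forall>j\<in>{1..k}. card {a\<in>E. \<chi> a = i} \<le> card {a\<in>E. \<chi> a = j} + 1)"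
proof -
  obtain \<chi> where \<chi>: "\<forall>a. \<chi> a \<in> {1..k}"
    and minimal: "\<forall>\<chi>'. (\<forall>a. \<chi>' a \<in> {1..k}) \<longrightarrow> colour_potential H k \<chi> \<le> colour_potential H k \<chi>'"
    using ex_has_least_nat[of "\<lambda>\<chi>. \<forall>a. \<chi> a \<in> {1..k}" "\<lambda>_. 1" "colour_potential H k"] \<open>1 \<le> k\<close> by auto
  have "card {a\<in>E. \<chi> a = c} \<le> card {a\<in>E. \<chi> a = d} + 1"
    if "E \<in> H" "c \<in> {1..k}" "d \<in> {1..k}" for E c d
  proof (rule ccontr)
    assume "\<not> ?thesis"
    then have "c \<noteq> d" and gap: "2 \<le> \<bar>int (card {a\<in>E. \<chi> a = c}) - int (card {a\<in>E. \<chi> a = d})\<bar>"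
      by auto
    obtain \<sigma> where \<sigma>: "\<forall>E\<in>H. \<bar>int (card {a\<in>E. \<chi> a \<in> {c, d} \<and> \<sigma> a})
                             - int (card {a\<in>E. \<chi> a \<in> {c, d} \<and> \<not> \<sigma> a})\<bar> \<le> 1"
      using two_colourable[rule_format, of "{a. \<chi> a \<in> {c, d}}"] by auto
    have "colour_potential H k (recolour \<chi> c d \<sigma>) < colour_potential H k \<chi>"
      unfolding colour_potential_def
    proof (rule sum_strict_mono_ex1[OF \<open>finite H\<close>])
      show "\<forall>E\<in>H. (\<Sum>i\<in>{1..k}. (card {a\<in>E. recolour \<chi> c d \<sigma> a = i})\<^sup>2)
                  \<le> (\<Sum>i\<in>{1..k}. (card {a\<in>E. \<chi> a = i})\<^sup>2)"
        using recolour_sum_squares(1)[of _ "{1..k}" c d \<chi> \<sigma>] \<sigma> that(2,3) assms(2) \<open>c \<noteq> d\<close> by auto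
      have "(\<Sum>i\<in>{1..k}. (card {a\<in>E. recolour \<chi> c d \<sigma> a = i})\<^sup>2)
              < (\<Sum>i\<in>{1..k}. (card {a\<in>E. \<chi> a = i})\<^sup>2)"
        using recolour_sum_squares(2)[of E "{1..k}" c d \<chi> \<sigma>] \<sigma> gap that assms(2) \<open>c \<noteq> d\<close> by auto
      then show "\<exists>E\<in>H. (\<Sum>i\<in>{1..k}. (card {a\<in>E. recolour \<chi> c d \<sigma> a = i})\<^sup>2)
                  < (\<Sum>i\<in>{1..k}. (card {a\<in>E. \<chi> a = i})\<^sup>2)"
        using \<open>E \<in> H\<close> by blast
    qed
    moreover have "\<forall>a. recolour \<chi> c d \<sigma> a \<in> {1..k}"
      using \<chi> that by (simp add: recolour_def)
    ultimately show False using minimal by (meson not_le)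
  qed
  with \<chi> show ?thesis by blast
qed

lemma balancedI:
  assumes "1 \<le> k"
    and "\<forall>x. \<forall>i\<in>{1..k}. \<forall>j\<in>{1..k}. color_count \<I> \<chi> i x \<le> color_count \<I> \<chi> j x + 1"
  shows "balanced \<I> k \<chi>"
  unfolding balanced_def imb_at_def
proof
  fix x
  let ?diff = "\<lambda>(i, j). \<bar>int (color_count \<I> \<chi> i x) - int (color_count \<I> \<chi> j x)\<bar>"
  have "{\<bar>int (color_count \<I> \<chi> i x) - int (color_count \<I> \<chi> j x)\<bar> | i j. i \<in> {1..k} \<and> j \<in> {1..k}}
      = ?diff ` ({1..k} \<times> {1..k})" by (auto; blast)
  moreover have "?diff p \<le> 1" if "p \<in> {1..k} \<times> {1..k}" for p
    using that spec[OF assms(2), of x] by (cases p) (force simp: abs_le_iff)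
  ultimately show "Max {\<bar>int (color_count \<I> \<chi> i x) - int (color_count \<I> \<chi> j x)\<bar> | i j. i \<in> {1..k} \<and> j \<in> {1..k}} \<le> 1"
    using \<open>1 \<le> k\<close> by (subst Max_le_iff) auto
qed

lemma interval_point_sets_two_colourable:
  assumes "finite \<I>" "\<forall>I\<in>\<I>. fst I \<le> snd I"
  shows "\<forall>J. \<exists>\<sigma>. \<forall>E\<in>range (\<lambda>x. {I\<in>\<I>. x \<in> closed_interval I}).
    \<bar>int (card {a\<in>E. a \<in> J \<and> \<sigma> a}) - int (card {a\<in>E. a \<in> J \<and> \<not> \<sigma> a})\<bar> \<le> 1"
proof
  fix J
  obtain \<sigma> where "\<forall>x. \<bar>int (card {I\<in>\<I> \<inter> J. x \<in> closed_interval I \<and> \<sigma> I})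
                       - int (card {I\<in>\<I> \<inter> J. x \<in> closed_interval I \<and> \<not> \<sigma> I})\<bar> \<le> 1"
    using interval_two_colouring[of "\<I> \<inter> J"] assms by auto
  then show "\<exists>\<sigma>. \<forall>E\<in>range (\<lambda>x. {I\<in>\<I>. x \<in> closed_interval I}).
    \<bar>int (card {a\<in>E. a \<in> J \<and> \<sigma> a}) - int (card {a\<in>E. a \<in> J \<and> \<not> \<sigma> a})\<bar> \<le> 1"
    by (intro exI[of _ \<sigma>]) (simp add: conj_ac)
qed

theorem theorem1:
  fixes \<I> :: "(real \<times> real) set" and k :: nat
  assumes "finite \<I>"
    and "\<forall>I\<in>\<I>. fst I \<le> snd I"
    and "k \<ge> 1"
  shows "\<exists>\<chi>. is_k_coloring \<I> k \<chi> \<and> balanced \<I> k \<chi>"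
proof -
  define H where "H = range (\<lambda>x. {I\<in>\<I>. x \<in> closed_interval I})"
  have "H \<subseteq> Pow \<I>" unfolding H_def by blast
  then have "finite H" using \<open>finite \<I>\<close> by (simp add: finite_subset)
  have "\<forall>E\<in>H. finite E" unfolding H_def using \<open>finite \<I>\<close> by auto
  have two_colourable: "\<forall>J. \<exists>\<sigma>. \<forall>E\<in>H.
      \<bar>int (card {a\<in>E. a \<in> J \<and> \<sigma> a}) - int (card {a\<in>E. a \<in> J \<and> \<not> \<sigma> a})\<bar> \<le> 1"
    unfolding H_def using interval_point_sets_two_colourable[OF assms(1,2)] .
  obtain \<chi> where \<chi>: "\<forall>a. \<chi> a \<in> {1..k}"
    and classes: "\<forall>E\<in>H. \<forall>i\<in>{1..k}. \<forall>j\<in>{1..k}. card {a\<in>E. \<chi> a = i} \<le> card {a\<in>E. \<chi> a = j} + 1"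
    using hypergraph_balanced_colouring[OF \<open>finite H\<close> \<open>\<forall>E\<in>H. finite E\<close> \<open>k \<ge> 1\<close> two_colourable]
    by blast
  have "color_count \<I> \<chi> i x = card {a\<in>{I\<in>\<I>. x \<in> closed_interval I}. \<chi> a = i}" for i x
    unfolding color_count_def by (intro arg_cong[where f = card]) auto
  then have "balanced \<I> k \<chi>"
    using classes \<open>k \<ge> 1\<close> unfolding H_def by (intro balancedI) auto
  moreover have "is_k_coloring \<I> k \<chi>" using \<chi> unfolding is_k_coloring_def by blast
  ultimately show ?thesis by blast
qed

end
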